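(* Let $(I,d)$ and $(I',d')$ be Ptolemy segments. Let $x_1,x_3$ be the boundary points of $I$ and $x'_1,x'_3$ the boundary points of $I'$, and let $x_2$ be an inner point of $I$ and $x'_2$ an inner point of $I'$. Then there exists a unique Möbius homeomorphism $\phi:I\to I'$ with $\phi(x_i)=x'_i$ for $i=1,2,3$.
   Context: A Ptolemy segment is a compact interval $I\subset\mathbb{R}$ with a metric $d$ inducing its standard topology such that $d(x_1,x_3)d(x_2,x_4)=d(x_1,x_2)d(x_3,x_4)+d(x_1,x_4)d(x_3,x_2)$ whenever $x_1,x_2,x_3,x_4$ lie in this order on $I$. A quadruple is admissible if no entry occurs three or four times; the cross ratio triple is $\mathrm{crt}(x,y,z,w)=(d(x,y)d(z,w):d(x,z)d(y,w):d(x,w)d(y,z))\in\mathbb{R}P^2$. A map between metric spaces is Möbius if it is injective and preserves $\mathrm{crt}$ of all admissible quadruples. *)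

theory Defs
  imports "HOL-Analysis.Analysis"
begin

definition ptolemy_segment :: "real set \<Rightarrow> (real \<Rightarrow> real \<Rightarrow> real) \<Rightarrow> bool" where
  "ptolemy_segment I d \<longleftrightarrow>
     (\<exists>a b. a \<le> b \<and> I = {a..b}) \<and>
     Metric_space I d \<and>
     Metric_space.mtopology I d = top_of_set I \<and>
     (\<forall>x1 x2 x3 x4. x1 \<in> I \<longrightarrow> x2 \<in> I \<longrightarrow> x3 \<in> I \<longrightarrow> x4 \<in> I \<longrightarrow>
        x1 \<le> x2 \<longrightarrow> x2 \<le> x3 \<longrightarrow> x3 \<le> x4 \<longrightarrow>
        d x1 x3 * d x2 x4 = d x1 x2 * d x3 x4 + d x1 x4 * d x3 x2)"

definition admissible :: "'a \<Rightarrow> 'a \<Rightarrow> 'a \<Rightarrow> 'a \<Rightarrow> bool" where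
  "admissible x y z w \<longleftrightarrow>
     \<not> (x = y \<and> y = z) \<and> \<not> (x = y \<and> y = w) \<and>
     \<not> (x = z \<and> z = w) \<and> \<not> (y = z \<and> z = w)"

text \<open>Homogeneous coordinates of the cross ratio triple.\<close>

definition crt :: "('a \<Rightarrow> 'a \<Rightarrow> real) \<Rightarrow> 'a \<Rightarrow> 'a \<Rightarrow> 'a \<Rightarrow> 'a \<Rightarrow> real \<times> real \<times> real" where
  "crt d x y z w = (d x y * d z w, d x z * d y w, d x w * d y z)"

text \<open>Equality of points of RP^2 given by homogeneous coordinates.\<close>

definition proj_eq :: "real \<times> real \<times> real \<Rightarrow> real \<times> real \<times> real \<Rightarrow> bool" where
  "proj_eq u v \<longleftrightarrow> u \<noteq> (0, 0, 0) \<and> v \<noteq> (0, 0, 0) \<and>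
     (\<exists>t. t \<noteq> 0 \<and> fst v = t * fst u \<and> fst (snd v) = t * fst (snd u)
           \<and> snd (snd v) = t * snd (snd u))"

definition moebius :: "'a set \<Rightarrow> ('a \<Rightarrow> 'a \<Rightarrow> real) \<Rightarrow> 'b set \<Rightarrow> ('b \<Rightarrow> 'b \<Rightarrow> real)
                        \<Rightarrow> ('a \<Rightarrow> 'b) \<Rightarrow> bool" where
  "moebius M d M' d' f \<longleftrightarrow>
     f ` M \<subseteq> M' \<and> inj_on f M \<and>
     (\<forall>x\<in>M. \<forall>y\<in>M. \<forall>z\<in>M. \<forall>w\<in>M. admissible x y z w \<longrightarrow>
        proj_eq (crt d x y z w) (crt d' (f x) (f y) (f z) (f w)))"

end

theory Submission
  imports Defs
begin

text \<open>
  Let \<open>a, b\<close> be the ends of the Ptolemy segment \<open>I\<close>. Ptolemy's equality with the ends gives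
  \<open>d x y \<cdot> d a b = \<bar>d a y \<cdot> d x b - d a x \<cdot> d y b\<bar>\<close>, so a point is determined by the
  ratio \<open>d a x : d x b\<close>, and by continuity every ratio occurs. The map \<open>\<phi>\<close> sending \<open>x\<close> to
  the point of \<open>I'\<close> with ratio \<open>d a x : k \<cdot> d x b\<close>, where \<open>k\<close> is chosen so that
  \<open>\<phi> c = c'\<close>, then satisfies \<open>d' (\<phi> x) (\<phi> y) = C \<cdot> \<mu> x \<cdot> \<mu> y \<cdot> d x y\<close> for a
  positive bounded factor \<open>\<mu>\<close>: it preserves cross ratios and is Lipschitz, hence a
  homeomorphism of the compact segments. Conversely, the cross ratio of \<open>(a, x, c, b)\<close>
  forces any Moebius map fixing the three points to have the same ratio at \<open>x\<close> as \<open>\<phi>\<close>.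
\<close>

lemma proportional_pair_eq:
  fixes p q u v :: real
  assumes "p * v = q * u" and "u + v \<noteq> 0"
  shows "p = (p + q) / (u + v) * u" and "q = (p + q) / (u + v) * v"
  using assms by (simp_all add: field_simps)

lemma proj_eq_scaled:
  assumes "u \<noteq> (0, 0, 0)" and "t \<noteq> 0"
    and "v = (t * fst u, t * fst (snd u), t * snd (snd u))"
  shows "proj_eq u v"
  using assms unfolding proj_eq_def by (cases u) auto

lemma (in Metric_space) crt_nonzero:
  assumes "x \<in> M" "y \<in> M" "z \<in> M" "w \<in> M" and "admissible x y z w"
  shows "crt d x y z w \<noteq> (0, 0, 0)"
  using assms unfolding crt_def admissible_def by (auto simp: commute)

lemma moebius_if_conformal:
  assumes M: "Metric_space M d" and f: "f ` M \<subseteq> M'" and "0 < c"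
    and \<nu>: "\<And>x. x \<in> M \<Longrightarrow> 0 < \<nu> x"
    and dist_f: "\<And>x y. x \<in> M \<Longrightarrow> y \<in> M \<Longrightarrow> d' (f x) (f y) = c * \<nu> x * \<nu> y * d x y"
  shows "moebius M d M' d' f"
  unfolding moebius_def
proof (intro conjI ballI impI)
  interpret Metric_space M d by (rule M)
  show "inj_on f M"
  proof (rule inj_onI)
    fix x y assume "x \<in> M" "y \<in> M" "f x = f y"
    then have "c * \<nu> x * \<nu> y * d x y = d' (f x) (f x)" using dist_f by metis
    also have "\<dots> = c * \<nu> x * \<nu> x * d x x" using dist_f \<open>x \<in> M\<close> by blast
    finally show "x = y"
      using \<open>0 < c\<close> \<nu>[OF \<open>x \<in> M\<close>] \<nu>[OF \<open>y \<in> M\<close>] \<open>x \<in> M\<close> \<open>y \<in> M\<close> by simp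
  qed
  fix x y z w assume in_M: "x \<in> M" "y \<in> M" "z \<in> M" "w \<in> M" and "admissible x y z w"
  define t where "t = (c * c) * (\<nu> x * \<nu> y * \<nu> z * \<nu> w)"
  have "t \<noteq> 0" using \<open>0 < c\<close> \<nu> in_M by (simp add: t_def less_imp_neq[symmetric])
  moreover have "crt d' (f x) (f y) (f z) (f w)
      = (t * fst (crt d x y z w), t * fst (snd (crt d x y z w)), t * snd (snd (crt d x y z w)))"
    using in_M by (simp add: crt_def dist_f t_def algebra_simps)
  ultimately show "proj_eq (crt d x y z w) (crt d' (f x) (f y) (f z) (f w))"
    using proj_eq_scaled crt_nonzero[OF in_M \<open>admissible x y z w\<close>] by blast
qed (use f in auto)

locale ptolemy_segment_ends =
  fixes I :: "real set" and d :: "real \<Rightarrow> real \<Rightarrow> real" and a b :: real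
  assumes ptolemy: "ptolemy_segment I d"
    and ends: "{a, b} = {Inf I, Sup I}" and ends_distinct: "a \<noteq> b"
begin

sublocale Metric_space I d
  using ptolemy by (simp add: ptolemy_segment_def)

lemma mtopology_eq: "mtopology = top_of_set I"
  using ptolemy by (simp add: ptolemy_segment_def)

lemma segment_interval:
  obtains lo hi where "lo < hi" "I = {lo..hi}" "a = lo \<and> b = hi \<or> a = hi \<and> b = lo"
proof -
  obtain lo hi where "lo \<le> hi" "I = {lo..hi}"
    using ptolemy unfolding ptolemy_segment_def by blast
  moreover from this have "Inf I = lo" "Sup I = hi" by auto
  ultimately show thesis
    using that ends ends_distinct by (metis doubleton_eq_iff order_le_less)
qed

lemma ends_in_segment: "a \<in> I" "b \<in> I"
  by (metis atLeastAtMost_iff order.refl less_imp_le segment_interval)+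

lemma ptolemy_ends_ordered:
  assumes "x \<in> I" "y \<in> I" "x \<le> y"
  shows "d x y * d a b = \<bar>d a y * d x b - d a x * d y b\<bar>"
proof -
  have ptolemy_eq: "d x1 x3 * d x2 x4 = d x1 x2 * d x3 x4 + d x1 x4 * d x3 x2"
    if "x1 \<in> I" "x2 \<in> I" "x3 \<in> I" "x4 \<in> I" "x1 \<le> x2" "x2 \<le> x3" "x3 \<le> x4"
    for x1 x2 x3 x4
    using ptolemy that unfolding ptolemy_segment_def by blast
  obtain lo hi where "I = {lo..hi}" "a = lo \<and> b = hi \<or> a = hi \<and> b = lo"
    by (rule segment_interval)
  then consider "a \<le> x" "y \<le> b" | "b \<le> x" "y \<le> a" using assms by auto
  then show ?thesis
  proof cases
    case 1
    then have "d a y * d x b = d a x * d y b + d a b * d x y"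
      using ptolemy_eq[of a x y b] assms ends_in_segment by (simp add: commute)
    then show ?thesis by (simp add: algebra_simps)
  next
    case 2
    then have "d a x * d y b = d a y * d x b + d a b * d x y"
      using ptolemy_eq[of b x y a] assms ends_in_segment by (simp add: commute mult.commute)
    then show ?thesis by (simp add: algebra_simps)
  qed
qed

lemma ptolemy_ends:
  assumes "x \<in> I" "y \<in> I"
  shows "d x y * d a b = \<bar>d a y * d x b - d a x * d y b\<bar>"
proof (cases "x \<le> y")
  case False
  then have "d y x * d a b = \<bar>d a x * d y b - d a y * d x b\<bar>"
    using ptolemy_ends_ordered assms by simp
  then show ?thesis by (simp add: commute abs_minus_commute)
qed (use ptolemy_ends_ordered assms in blast)

lemma compact_space_segment: "compact_space mtopology"
proof -
  obtain lo hi where "I = {lo..hi}" by (rule segment_interval)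
  then show ?thesis unfolding mtopology_eq by (simp add: compact_space_subtopology)
qed

lemma segment_bounded: obtains B where "\<And>x y. x \<in> I \<Longrightarrow> y \<in> I \<Longrightarrow> d x y \<le> B"
  using compactin_imp_mbounded[of I] compact_space_segment
  by (metis compact_space_def mbounded_alt topspace_mtopology)

lemma continuous_on_dist:
  assumes "c \<in> I"
  shows "continuous_on I (d c)"
proof -
  have "Lipschitz_continuous_map (metric (I, d)) euclidean_metric (d c)"
    unfolding Lipschitz_continuous_map_def using assms
    by (auto intro!: exI[of _ 1] simp: dist_real_def abs_le_iff)
      (smt (verit) commute triangle)+
  then have "continuous_map mtopology euclidean (d c)"
    using Lipschitz_continuous_imp_continuous_map by fastforce
  then show ?thesis by (simp add: mtopology_eq continuous_map_iff_continuous)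
qed

lemma ex_end_dist_ratio:
  assumes "0 \<le> u" "0 \<le> v"
  shows "\<exists>x\<in>I. d a x * v = d x b * u"
proof -
  define h where "h x = d a x * v - d x b * u" for x
  obtain lo hi where lohi: "lo < hi" "I = {lo..hi}" "a = lo \<and> b = hi \<or> a = hi \<and> b = lo"
    by (rule segment_interval)
  have "continuous_on {lo..hi} h"
    unfolding h_def using lohi(2) continuous_on_dist[OF ends_in_segment(1)]
      continuous_on_dist[OF ends_in_segment(2)]
    by (intro continuous_intros) (auto simp: commute)
  moreover have "h a \<le> 0" "0 \<le> h b"
    using assms ends_in_segment by (simp_all add: h_def)
  ultimately obtain x where "lo \<le> x" "x \<le> hi" "h x = 0"
    using lohi IVT'[of h lo 0 hi] IVT2'[of h hi 0 lo] by auto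
  then show ?thesis using lohi(2) by (auto simp: h_def)
qed

lemma end_dist_ratio_unique:
  assumes "y \<in> I" "z \<in> I" "u \<noteq> 0 \<or> v \<noteq> 0"
    and "d a y * v = d y b * u" "d a z * v = d z b * u"
  shows "y = z"
proof -
  let ?D = "d a z * d y b - d a y * d z b"
  have "?D * u = d a z * (d y b * u) - d a y * (d z b * u)" by (simp add: algebra_simps)
  also have "\<dots> = d a z * (d a y * v) - d a y * (d a z * v)" by (simp only: assms(4,5))
  finally have "?D * u = 0" by simp
  have "?D * v = (d a z * v) * d y b - (d a y * v) * d z b" by (simp add: algebra_simps)
  also have "\<dots> = (d z b * u) * d y b - (d y b * u) * d z b" by (simp only: assms(4,5))
  finally have "?D * v = 0" by simp
  with \<open>?D * u = 0\<close> have "?D = 0" using assms(3) by auto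
  then have "d y z * d a b = 0" using ptolemy_ends[OF assms(1,2)] by simp
  then show ?thesis using ends_distinct ends_in_segment assms(1,2) by simp
qed

definition ratio_point :: "real \<Rightarrow> real \<Rightarrow> real" where
  "ratio_point u v = (THE x. x \<in> I \<and> d a x * v = d x b * u)"

lemma ratio_point:
  assumes "0 \<le> u" "0 \<le> v" "0 < u + v"
  shows "ratio_point u v \<in> I" and "d a (ratio_point u v) * v = d (ratio_point u v) b * u"
proof -
  have "u \<noteq> 0 \<or> v \<noteq> 0" using assms(3) by auto
  then have "\<exists>!x. x \<in> I \<and> d a x * v = d x b * u"
    using ex_end_dist_ratio[OF assms(1,2)] end_dist_ratio_unique by blast
  from theI'[OF this]
  show "ratio_point u v \<in> I" "d a (ratio_point u v) * v = d (ratio_point u v) b * u"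
    unfolding ratio_point_def by blast+
qed

lemma ratio_point_eqI:
  assumes "0 \<le> u" "0 \<le> v" "0 < u + v" "y \<in> I" "d a y * v = d y b * u"
  shows "ratio_point u v = y"
  using end_dist_ratio_unique ratio_point assms by (metis less_irrefl add.right_neutral)

end

locale ptolemy_segment_pair =
  S: ptolemy_segment_ends I d a b + T: ptolemy_segment_ends I' d' a' b'
  for I d a b I' d' a' b' +
  fixes c c' :: real
  assumes inner: "c \<in> I - {a, b}" and inner': "c' \<in> I' - {a', b'}"
begin

definition scale :: real where
  "scale = d a c * d' c' b' / (d c b * d' a' c')"

definition moebius_map :: "real \<Rightarrow> real" where
  "moebius_map x = T.ratio_point (d a x) (scale * d x b)"

lemma scale_pos: "0 < scale"
  using inner inner' S.ends_in_segment T.ends_in_segment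
  by (auto simp: scale_def S.commute T.commute)

lemma end_dist_sum_pos:
  assumes "x \<in> I"
  shows "0 < d a x + scale * d x b"
  using assms scale_pos S.ends_distinct S.ends_in_segment
  by (cases "x = a") (auto intro: add_pos_nonneg add_nonneg_pos)

lemma moebius_map:
  assumes "x \<in> I"
  shows "moebius_map x \<in> I'"
    and "d' a' (moebius_map x) * (scale * d x b) = d' (moebius_map x) b' * d a x"
  unfolding moebius_map_def using T.ratio_point end_dist_sum_pos[OF assms] scale_pos by simp_all

lemma moebius_map_eqI:
  assumes "x \<in> I" "y \<in> I'" "d' a' y * (scale * d x b) = d' y b' * d a x"
  shows "moebius_map x = y"
  unfolding moebius_map_def
  using T.ratio_point_eqI end_dist_sum_pos[OF assms(1)] scale_pos assms by simp

lemma moebius_map_ends: "moebius_map a = a'" "moebius_map b = b'"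
  using moebius_map_eqI S.ends_in_segment T.ends_in_segment by simp_all

lemma moebius_map_inner: "moebius_map c = c'"
  using inner inner' S.ends_in_segment T.ends_in_segment
  by (intro moebius_map_eqI) (auto simp: scale_def S.commute T.commute)

definition conformal_factor :: "real \<Rightarrow> real" where
  "conformal_factor x = (d' a' (moebius_map x) + d' (moebius_map x) b') / (d a x + scale * d x b)"

lemma conformal_factor_pos:
  assumes "x \<in> I"
  shows "0 < conformal_factor x"
proof -
  have "0 < d' a' (moebius_map x) + d' (moebius_map x) b'"
    using moebius_map(1)[OF assms] T.ends_distinct T.ends_in_segment
    by (cases "moebius_map x = a'") (auto intro: add_pos_nonneg add_nonneg_pos)
  then show ?thesis unfolding conformal_factor_def using end_dist_sum_pos[OF assms] by simp
qed

lemma dist_ends_moebius_map: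
  assumes "x \<in> I"
  shows "d' a' (moebius_map x) = conformal_factor x * d a x"
    and "d' (moebius_map x) b' = conformal_factor x * (scale * d x b)"
  using proportional_pair_eq[OF moebius_map(2)[OF assms]] end_dist_sum_pos[OF assms]
  unfolding conformal_factor_def by simp_all

lemma dist_moebius_map:
  assumes "x \<in> I" "y \<in> I"
  shows "d' (moebius_map x) (moebius_map y)
    = scale * d a b / d' a' b' * conformal_factor x * conformal_factor y * d x y"
proof -
  let ?\<mu> = conformal_factor
  have "d' (moebius_map x) (moebius_map y) * d' a' b'
      = \<bar>d' a' (moebius_map y) * d' (moebius_map x) b'
          - d' a' (moebius_map x) * d' (moebius_map y) b'\<bar>"
    using T.ptolemy_ends moebius_map(1) assms by blast
  also have "\<dots> = \<bar>scale * ?\<mu> x * ?\<mu> y * (d a y * d x b - d a x * d y b)\<bar>"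
    using assms by (simp add: dist_ends_moebius_map algebra_simps)
  also have "\<dots> = scale * ?\<mu> x * ?\<mu> y * \<bar>d a y * d x b - d a x * d y b\<bar>"
    using scale_pos conformal_factor_pos[OF assms(1)] conformal_factor_pos[OF assms(2)]
    by (simp add: abs_mult)
  also have "\<dots> = scale * ?\<mu> x * ?\<mu> y * (d x y * d a b)"
    using S.ptolemy_ends assms by simp
  finally show ?thesis
    using T.ends_distinct T.ends_in_segment by (simp add: field_simps)
qed

lemma image_moebius_map: "moebius_map ` I = I'"
proof
  show "moebius_map ` I \<subseteq> I'" using moebius_map(1) by blast
  show "I' \<subseteq> moebius_map ` I"
  proof
    fix y assume "y \<in> I'"
    obtain x where "x \<in> I" "d a x * (d' y b' / scale) = d x b * d' a' y"
      using S.ex_end_dist_ratio[of "d' a' y" "d' y b' / scale"] scale_pos by auto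
    then have "moebius_map x = y"
      using \<open>y \<in> I'\<close> scale_pos by (intro moebius_map_eqI) (auto simp: field_simps)
    with \<open>x \<in> I\<close> show "y \<in> moebius_map ` I" by blast
  qed
qed

lemma moebius_moebius_map: "moebius I d I' d' moebius_map"
proof (rule moebius_if_conformal[where \<nu> = conformal_factor and c = "scale * d a b / d' a' b'"])
  show "0 < scale * d a b / d' a' b'"
    using scale_pos S.ends_distinct S.ends_in_segment T.ends_distinct T.ends_in_segment by simp
qed (use S.Metric_space_axioms image_moebius_map conformal_factor_pos dist_moebius_map in auto)

lemma conformal_factor_bounded:
  obtains C where "\<And>x. x \<in> I \<Longrightarrow> conformal_factor x \<le> C"
proof -
  obtain B where B: "\<And>y z. y \<in> I' \<Longrightarrow> z \<in> I' \<Longrightarrow> d' y z \<le> B"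
    using T.segment_bounded by blast
  define m where "m = min 1 scale * d a b"
  have "0 < m"
    using scale_pos S.ends_distinct S.ends_in_segment by (simp add: m_def)
  have "conformal_factor x \<le> 2 * B / m" if "x \<in> I" for x
  proof -
    have "m \<le> min 1 scale * (d a x + d x b)"
      unfolding m_def using S.triangle S.ends_in_segment that scale_pos
      by (intro mult_left_mono) auto
    also have "\<dots> \<le> d a x + scale * d x b"
      using mult_right_mono[OF min.cobounded1, of "d a x" 1 scale]
        mult_right_mono[OF min.cobounded2, of "d x b" 1 scale]
      by (simp add: distrib_left)
    finally have "m \<le> d a x + scale * d x b" .
    moreover have "d' a' (moebius_map x) + d' (moebius_map x) b' \<le> 2 * B"
      using B moebius_map(1)[OF that] T.ends_in_segment by (smt (verit))
    moreover have "0 \<le> 2 * B"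
      using B T.ends_in_segment T.nonneg[of a' a'] by fastforce
    ultimately show ?thesis
      unfolding conformal_factor_def using \<open>0 < m\<close> by (intro frac_le)
  qed
  then show thesis by (rule that)
qed

lemma homeomorphic_map_moebius_map:
  "homeomorphic_map S.mtopology T.mtopology moebius_map"
proof (rule continuous_imp_homeomorphic_map)
  obtain C where C: "\<And>x. x \<in> I \<Longrightarrow> conformal_factor x \<le> C"
    using conformal_factor_bounded by blast
  have "d' (moebius_map x) (moebius_map y) \<le> scale * d a b / d' a' b' * C * C * d x y"
    if "x \<in> I" "y \<in> I" for x y
  proof -
    have "0 \<le> C" using C[OF that(1)] conformal_factor_pos[OF that(1)] by linarith
    then have "conformal_factor x * conformal_factor y \<le> C * C"
      using C conformal_factor_pos that by (intro mult_mono) (auto intro: less_imp_le)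
    moreover have "0 \<le> scale * d a b / d' a' b'"
      using scale_pos S.ends_in_segment T.ends_in_segment by simp
    ultimately have "scale * d a b / d' a' b' * (conformal_factor x * conformal_factor y) * d x y
        \<le> scale * d a b / d' a' b' * (C * C) * d x y"
      using that by (intro mult_right_mono mult_left_mono) auto
    then show ?thesis by (simp only: dist_moebius_map[OF that] mult.assoc)
  qed
  then have "Lipschitz_continuous_map (metric (I, d)) (metric (I', d')) moebius_map"
    unfolding Lipschitz_continuous_map_def S.mspace_metric T.mspace_metric
      S.mdist_metric T.mdist_metric
    using moebius_map(1) by blast
  then show "continuous_map S.mtopology T.mtopology moebius_map"
    using Lipschitz_continuous_imp_continuous_map by fastforce
  show "compact_space S.mtopology" by (rule S.compact_space_segment)
  show "Hausdorff_space T.mtopology" by (rule T.Hausdorff_space_mtopology)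
  show "moebius_map ` topspace S.mtopology = topspace T.mtopology"
    using image_moebius_map by simp
  show "inj_on moebius_map (topspace S.mtopology)"
    using moebius_moebius_map by (simp add: moebius_def)
qed

lemma moebius_map_unique:
  assumes \<psi>: "moebius I d I' d' \<psi>" "\<psi> a = a'" "\<psi> c = c'" "\<psi> b = b'" and "x \<in> I"
  shows "\<psi> x = moebius_map x"
proof -
  have "admissible a x c b" using inner S.ends_distinct by (auto simp: admissible_def)
  then have "proj_eq (crt d a x c b) (crt d' a' (\<psi> x) c' b')"
    using \<psi> \<open>x \<in> I\<close> inner S.ends_in_segment unfolding moebius_def by (metis DiffD1)
  then obtain t where t: "d' a' (\<psi> x) * d' c' b' = t * (d a x * d c b)"
      "d' a' c' * d' (\<psi> x) b' = t * (d a c * d x b)"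
    unfolding proj_eq_def crt_def by auto
  have "d c b \<noteq> 0" "d' a' c' \<noteq> 0"
    using inner inner' S.ends_in_segment T.ends_in_segment by auto
  then have "d' a' (\<psi> x) * (scale * d x b) = d' (\<psi> x) b' * d a x"
    unfolding scale_def using t by (simp add: field_simps)
  moreover have "\<psi> x \<in> I'" using \<psi>(1) \<open>x \<in> I\<close> unfolding moebius_def by auto
  ultimately show ?thesis using moebius_map_eqI \<open>x \<in> I\<close> by simp
qed

end

theorem theorem3p1:
  fixes I I' :: "real set" and d d' :: "real \<Rightarrow> real \<Rightarrow> real"
    and x1 x2 x3 x1' x2' x3' :: real
  assumes "ptolemy_segment I d" and "ptolemy_segment I' d'"
    and "{x1, x3} = {Inf I, Sup I}" and "x1 \<noteq> x3"
    and "{x1', x3'} = {Inf I', Sup I'}" and "x1' \<noteq> x3'"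
    and "x2 \<in> I - {x1, x3}" and "x2' \<in> I' - {x1', x3'}"
  shows "\<exists>\<phi>. (homeomorphic_map (Metric_space.mtopology I d) (Metric_space.mtopology I' d') \<phi>
              \<and> moebius I d I' d' \<phi> \<and> \<phi> x1 = x1' \<and> \<phi> x2 = x2' \<and> \<phi> x3 = x3')
           \<and> (\<forall>\<psi>. homeomorphic_map (Metric_space.mtopology I d) (Metric_space.mtopology I' d') \<psi>
                 \<and> moebius I d I' d' \<psi> \<and> \<psi> x1 = x1' \<and> \<psi> x2 = x2' \<and> \<psi> x3 = x3'
                 \<longrightarrow> (\<forall>x\<in>I. \<psi> x = \<phi> x))"
proof -
  interpret ptolemy_segment_pair I d x1 x3 I' d' x1' x3' x2 x2'
    using assms by (simp add: ptolemy_segment_pair_def ptolemy_segment_pair_axioms_def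
        ptolemy_segment_ends_def)
  show ?thesis
    using homeomorphic_map_moebius_map moebius_moebius_map moebius_map_ends moebius_map_inner
      moebius_map_unique
    by blast
qed

end
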